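(* Let $(G,G^+)$ be a simple Riesz group, and let $I=(q_i)_{i\ge1}$ be an increasing sequence of non-negative integers with $\gcd(q_i,q_j)=1$ for all $i\neq j$. Suppose that for every $i$ there is a countably generated interval $D_i$ in $G^+$ with $tD_i\neq G^+$ for every positive integer $t\le q_i-1$ and $q_iD_i=G^+$. Then there exists a sequence $(X_i)_{i\ge1}$ of countably generated intervals in $G^+$, descending in the algebraic ordering of the monoid of countably generated intervals (i.e. for each $i$ there is a countably generated interval $Y_i$ with $X_{i+1}+Y_i=X_i$), such that $tX_i\neq G^+$ for every positive integer $t\le q_i-1$ and $\left(\prod_{j=1}^i q_j\right)X_i=G^+$.
   Context: $(G,G^+)$ partially ordered abelian group; simple: $G\neq0$ and every nonzero element of $G^+$ is an order-unit. Riesz group: $x\le y_1+y_2$ in $G^+$ implies $x=x_1+x_2$ with $x_j\in G^+$, $x_j\le y_j$. An interval in $G^+$ is a nonempty, upward directed, order-hereditary subset of $G^+$; countably generated if it has a countable cofinal subset. Intervals form a monoid with $X+Y=\{z\in G^+: z\le x+y,\ x\in X,\ y\in Y\}$; $tX$ is the $t$-fold sum. *)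

theory Defs
  imports Main "HOL-Library.Countable_Set"
begin

definition pos_cone :: "'a::ordered_ab_group_add set" where
  "pos_cone = {x. 0 \<le> x}"

definition nsmul :: "nat \<Rightarrow> 'a::ab_group_add \<Rightarrow> 'a" where
  "nsmul n u = (\<Sum>_<n. u)"

definition order_unit :: "'a::ordered_ab_group_add \<Rightarrow> bool" where
  "order_unit u \<longleftrightarrow> 0 \<le> u \<and> (\<forall>x. \<exists>n. x \<le> nsmul n u)"

definition simple_group :: "'a::ordered_ab_group_add itself \<Rightarrow> bool" where
  "simple_group _ \<longleftrightarrow> (\<exists>x::'a. x \<noteq> 0) \<and>
     (\<forall>u::'a. 0 \<le> u \<and> u \<noteq> 0 \<longrightarrow> order_unit u)"

definition riesz_group :: "'a::ordered_ab_group_add itself \<Rightarrow> bool" where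
  "riesz_group _ \<longleftrightarrow> (\<forall>x y1 y2::'a. 0 \<le> x \<and> 0 \<le> y1 \<and> 0 \<le> y2 \<and> x \<le> y1 + y2 \<longrightarrow>
     (\<exists>x1 x2. x = x1 + x2 \<and> 0 \<le> x1 \<and> 0 \<le> x2 \<and> x1 \<le> y1 \<and> x2 \<le> y2))"

definition is_interval :: "'a::ordered_ab_group_add set \<Rightarrow> bool" where
  "is_interval X \<longleftrightarrow> X \<subseteq> pos_cone \<and> X \<noteq> {} \<and>
     (\<forall>x\<in>X. \<forall>y\<in>X. \<exists>z\<in>X. x \<le> z \<and> y \<le> z) \<and>
     (\<forall>x\<in>X. \<forall>z. 0 \<le> z \<and> z \<le> x \<longrightarrow> z \<in> X)"

definition cg_interval :: "'a::ordered_ab_group_add set \<Rightarrow> bool" where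
  "cg_interval X \<longleftrightarrow> is_interval X \<and>
     (\<exists>C. countable C \<and> C \<subseteq> X \<and> (\<forall>x\<in>X. \<exists>c\<in>C. x \<le> c))"

definition interval_add :: "'a::ordered_ab_group_add set \<Rightarrow> 'a set \<Rightarrow> 'a set" where
  "interval_add X Y = {z. 0 \<le> z \<and> (\<exists>x\<in>X. \<exists>y\<in>Y. z \<le> x + y)}"

text \<open>t-fold sum tX (0X is the zero interval {0}; only t >= 1 is used).\<close>
fun interval_mult :: "nat \<Rightarrow> 'a::ordered_ab_group_add set \<Rightarrow> 'a set" where
  "interval_mult 0 X = {0}"
| "interval_mult (Suc 0) X = X"
| "interval_mult (Suc (Suc n)) X = interval_add (interval_mult (Suc n) X) X"

end

theory Submission
  imports Defs
begin

(* For an interval S we have nS = G+ iff every g in G+ lies below n s for some s in S.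
   Riesz interpolation makes finite intersections of intervals intervals, and Riesz
   decomposition shows that pA = G+ and rB = G+ imply pr(A \<inter> B) = G+; the translates
   {b \<ge> 0. a + b \<in> D} of D inherit qD = G+.  Fix an order unit u and build sequences
   r_k(l) \<in> D_l, increasing in k: at step k choose an index j and an element d with
   r_k(l) + d \<in> D_l for all l \<le> j and k u \<le> (q_1 ... q_j) d, and add d to r_k(1), ..., r_k(j).
   Then the differences r_k(l) - r_k(l+1) increase as well, so the intervals X_l and Y_l
   generated by (r_k(l))_k and (r_k(l) - r_k(l+1))_k satisfy X_(l+1) + Y_l = X_l.  Since
   X_l \<subseteq> D_l, tX_l \<noteq> G+ for t < q_l, and choosing every j infinitely often gives
   (q_1 ... q_l) X_l = G+. *)

lemma nsmul_0 [simp]: "nsmul 0 u = 0"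
  by (simp add: nsmul_def)

lemma nsmul_Suc: "nsmul (Suc n) u = nsmul n u + u"
  by (simp add: nsmul_def)

lemma nsmul_1 [simp]: "nsmul (Suc 0) u = u"
  by (simp add: nsmul_def)

lemma nsmul_add: "nsmul (m + n) u = nsmul m u + nsmul n u"
  by (induction n) (auto simp: nsmul_Suc add.assoc)

lemma nsmul_diff: "nsmul n (x - y) = nsmul n x - nsmul n (y::'a::ab_group_add)"
  unfolding nsmul_def by (rule sum_subtractf)

lemma nsmul_mono: "(x::'a::ordered_ab_group_add) \<le> y \<Longrightarrow> nsmul n x \<le> nsmul n y"
  unfolding nsmul_def by (rule sum_mono)

lemma nsmul_nonneg: "0 \<le> (x::'a::ordered_ab_group_add) \<Longrightarrow> 0 \<le> nsmul n x"
  unfolding nsmul_def by (rule sum_nonneg)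

lemma nsmul_mono_left:
  assumes "0 \<le> (u::'a::ordered_ab_group_add)" and "m \<le> n"
  shows "nsmul m u \<le> nsmul n u"
proof -
  obtain d where "n = m + d"
    using \<open>m \<le> n\<close> le_Suc_ex by blast
  then show ?thesis
    using nsmul_nonneg[OF \<open>0 \<le> u\<close>, of d] by (simp add: nsmul_add)
qed

lemma simple_group_cofinal_element:
  assumes "simple_group TYPE('a)"
  obtains u :: "'a::ordered_ab_group_add" where "0 \<le> u" and "\<And>g. 0 \<le> g \<Longrightarrow> \<exists>n. g \<le> nsmul n u"
proof (cases "\<exists>u::'a. 0 \<le> u \<and> u \<noteq> 0")
  case True
  then obtain u :: 'a where "0 \<le> u" "u \<noteq> 0"
    by blast
  with assms have "order_unit u"
    unfolding simple_group_def by blast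
  then show ?thesis
    using that unfolding order_unit_def by blast
next
  case False
  then have "\<And>g::'a. 0 \<le> g \<Longrightarrow> g \<le> nsmul 0 0"
    by auto
  then show ?thesis
    using that[of 0] by blast
qed

lemma riesz_decomposition:
  fixes x y1 y2 :: "'a::ordered_ab_group_add"
  assumes "riesz_group TYPE('a)" and "0 \<le> x" "0 \<le> y1" "0 \<le> y2" "x \<le> y1 + y2"
  obtains x1 x2 where "x = x1 + x2" "0 \<le> x1" "0 \<le> x2" "x1 \<le> y1" "x2 \<le> y2"
  using assms unfolding riesz_group_def by blast

lemma riesz_interpolation:
  fixes x1 x2 y1 y2 :: "'a::ordered_ab_group_add"
  assumes R: "riesz_group TYPE('a)"
    and "x1 \<le> y1" "x1 \<le> y2" "x2 \<le> y1" "x2 \<le> y2"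
  obtains c where "x1 \<le> c" "x2 \<le> c" "c \<le> y1" "c \<le> y2"
proof -
  \<comment> \<open>Decompose y1 - x1 along (y1 - x2) + (y2 - x1); then c = x1 + w2 = y1 - w1.\<close>
  have "0 \<le> y2 - x2"
    using assms by simp
  then have "y1 - x1 \<le> (y1 - x2) + (y2 - x1)"
    by (simp add: algebra_simps)
  then obtain w1 w2 where w: "y1 - x1 = w1 + w2" "0 \<le> w1" "0 \<le> w2" "w1 \<le> y1 - x2" "w2 \<le> y2 - x1"
    using riesz_decomposition[OF R] assms by (metis diff_ge_0_iff_ge)
  then have c: "x1 + w2 = y1 - w1"
    by (simp add: algebra_simps)
  show ?thesis
  proof (rule that)
    show "x1 \<le> x1 + w2" "x1 + w2 \<le> y2"
      using w(3,5) by (simp_all add: le_diff_eq add.commute)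
    show "x2 \<le> x1 + w2" "x1 + w2 \<le> y1"
      unfolding c using w(2,4) by (simp_all add: le_diff_eq add.commute)
  qed
qed

lemma interval_nonneg: "is_interval X \<Longrightarrow> x \<in> X \<Longrightarrow> 0 \<le> x"
  by (auto simp: is_interval_def pos_cone_def)

lemma interval_directed:
  "is_interval X \<Longrightarrow> x \<in> X \<Longrightarrow> y \<in> X \<Longrightarrow> \<exists>z\<in>X. x \<le> z \<and> y \<le> z"
  by (auto simp: is_interval_def)

lemma interval_down_closed: "is_interval X \<Longrightarrow> x \<in> X \<Longrightarrow> 0 \<le> z \<Longrightarrow> z \<le> x \<Longrightarrow> z \<in> X"
  by (auto simp: is_interval_def)

lemma interval_zero: "is_interval X \<Longrightarrow> 0 \<in> X"
  unfolding is_interval_def pos_cone_def by blast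

lemma is_intervalI:
  assumes "\<And>x. x \<in> X \<Longrightarrow> 0 \<le> x" and "0 \<in> X"
    and "\<And>x y. x \<in> X \<Longrightarrow> y \<in> X \<Longrightarrow> \<exists>z\<in>X. x \<le> z \<and> y \<le> z"
    and "\<And>x z. x \<in> X \<Longrightarrow> 0 \<le> z \<Longrightarrow> z \<le> x \<Longrightarrow> z \<in> X"
  shows "is_interval X"
  using assms unfolding is_interval_def pos_cone_def by blast

lemma is_interval_pos_cone: "is_interval pos_cone"
proof (rule is_intervalI)
  fix x y :: 'a assume "x \<in> pos_cone" "y \<in> pos_cone"
  then show "\<exists>z\<in>pos_cone. x \<le> z \<and> y \<le> z"
    by (intro bexI[of _ "x + y"]) (auto simp: pos_cone_def add_increasing add_increasing2)
qed (auto simp: pos_cone_def)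

lemma is_interval_Int:
  assumes R: "riesz_group TYPE('a::ordered_ab_group_add)"
    and A: "is_interval (A::'a set)" and B: "is_interval B"
  shows "is_interval (A \<inter> B)"
proof (rule is_intervalI)
  fix x y assume xy: "x \<in> A \<inter> B" "y \<in> A \<inter> B"
  obtain a where a: "a \<in> A" "x \<le> a" "y \<le> a"
    using interval_directed[OF A] xy by blast
  obtain b where b: "b \<in> B" "x \<le> b" "y \<le> b"
    using interval_directed[OF B] xy by blast
  obtain c where c: "x \<le> c" "y \<le> c" "c \<le> a" "c \<le> b"
    using riesz_interpolation[OF R a(2) b(2) a(3) b(3)] by blast
  have "0 \<le> c"
    using interval_nonneg[OF A] xy c(1) by (meson IntD1 order.trans)
  then have "c \<in> A \<inter> B"
    using interval_down_closed[OF A a(1)] interval_down_closed[OF B b(1)] c by blast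
  with c show "\<exists>z\<in>A \<inter> B. x \<le> z \<and> y \<le> z"
    by blast
qed (use assms interval_nonneg interval_zero interval_down_closed in blast)+

lemma is_interval_INT:
  assumes R: "riesz_group TYPE('a::ordered_ab_group_add)" and "finite I"
    and "\<And>i. i \<in> I \<Longrightarrow> is_interval (A i :: 'a set)"
  shows "is_interval (pos_cone \<inter> \<Inter>(A ` I))"
  using assms(2,3)
proof (induction I rule: finite_induct)
  case empty
  then show ?case
    by (simp add: is_interval_pos_cone)
next
  case (insert i I)
  have "pos_cone \<inter> \<Inter>(A ` insert i I) = A i \<inter> (pos_cone \<inter> \<Inter>(A ` I))"
    by auto
  with insert show ?case
    using is_interval_Int[OF R] by simp
qed

definition mult_cofinal :: "nat \<Rightarrow> 'a::ordered_ab_group_add set \<Rightarrow> bool" where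
  "mult_cofinal n S \<longleftrightarrow> (\<forall>g\<ge>0. \<exists>s\<in>S. g \<le> nsmul n s)"

lemma interval_mult_eq:
  "is_interval (S::'a::ordered_ab_group_add set) \<Longrightarrow>
    interval_mult n S = {z. 0 \<le> z \<and> (\<exists>s\<in>S. z \<le> nsmul n s)}"
proof (induction n S rule: interval_mult.induct)
  case (1 S)
  then show ?case
    using interval_zero by (auto intro: antisym)
next
  case (2 S)
  then show ?case
    using interval_nonneg interval_down_closed by auto
next
  case (3 n S)
  show ?case
  proof (intro set_eqI iffI)
    fix z assume "z \<in> interval_mult (Suc (Suc n)) S"
    then obtain x y s1 where z: "0 \<le> z" "z \<le> x + y" "y \<in> S" "s1 \<in> S" "x \<le> nsmul (Suc n) s1"
      using 3 by (auto simp: interval_add_def)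
    obtain s where s: "s \<in> S" "s1 \<le> s" "y \<le> s"
      using interval_directed[OF "3.prems" z(4,3)] by blast
    have "x \<le> nsmul (Suc n) s"
      using z(5) nsmul_mono[OF s(2)] by (rule order.trans)
    then have "z \<le> nsmul (Suc (Suc n)) s"
      using z(2) s(3) add_mono unfolding nsmul_Suc[of "Suc n"] by (metis order.trans)
    with z(1) s(1) show "z \<in> {z. 0 \<le> z \<and> (\<exists>s\<in>S. z \<le> nsmul (Suc (Suc n)) s)}"
      by blast
  next
    fix z assume "z \<in> {z. 0 \<le> z \<and> (\<exists>s\<in>S. z \<le> nsmul (Suc (Suc n)) s)}"
    then obtain s where z: "0 \<le> z" "s \<in> S" "z \<le> nsmul (Suc n) s + s"
      by (auto simp: nsmul_Suc[of "Suc n"])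
    have "nsmul (Suc n) s \<in> interval_mult (Suc n) S"
      using 3 z(2) interval_nonneg nsmul_nonneg by blast
    with z show "z \<in> interval_mult (Suc (Suc n)) S"
      by (auto simp: interval_add_def)
  qed
qed

lemma interval_mult_eq_pos_cone_iff:
  "is_interval S \<Longrightarrow> interval_mult n S = pos_cone \<longleftrightarrow> mult_cofinal n S"
  unfolding interval_mult_eq mult_cofinal_def pos_cone_def by auto

lemma interval_mult_eq_pos_cone_mono:
  assumes "is_interval X" and "is_interval D" and "X \<subseteq> D"
    and "interval_mult n X = pos_cone"
  shows "interval_mult n D = pos_cone"
proof -
  have "mult_cofinal n X"
    using assms(1,4) interval_mult_eq_pos_cone_iff by blast
  then have "mult_cofinal n D"
    using \<open>X \<subseteq> D\<close> unfolding mult_cofinal_def by blast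
  then show ?thesis
    using assms(2) interval_mult_eq_pos_cone_iff by blast
qed

text \<open>Riesz decomposition splits g \<le> n a into n pieces below a, each dominated by m U.\<close>

lemma riesz_nsmul_bound:
  fixes a g :: "'a::ordered_ab_group_add"
  assumes R: "riesz_group TYPE('a)" and U: "is_interval U" and "0 \<le> a"
    and "0 \<le> g" and "g \<le> nsmul n a"
    and "\<And>h. 0 \<le> h \<Longrightarrow> h \<le> a \<Longrightarrow> h \<le> g \<Longrightarrow> \<exists>c\<in>U. h \<le> nsmul m c"
  shows "\<exists>c\<in>U. g \<le> nsmul (n * m) c"
  using assms(4-6)
proof (induction n arbitrary: g)
  case 0
  then have "g = 0"
    by simp
  then show ?case
    using interval_zero[OF U] by auto
next
  case (Suc n)
  have "g \<le> nsmul n a + a"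
    using Suc.prems by (simp add: nsmul_Suc)
  then obtain g1 g2 where g: "g = g1 + g2" "0 \<le> g1" "0 \<le> g2" "g1 \<le> nsmul n a" "g2 \<le> a"
    using riesz_decomposition[OF R] Suc.prems(1) nsmul_nonneg \<open>0 \<le> a\<close> by metis
  then have "g1 \<le> g" "g2 \<le> g"
    by simp_all
  then have "\<And>h. h \<le> g1 \<Longrightarrow> h \<le> g"
    by (meson order.trans)
  then obtain c1 where c1: "c1 \<in> U" "g1 \<le> nsmul (n * m) c1"
    using Suc.IH g(2,4) Suc.prems(3) by blast
  obtain c2 where c2: "c2 \<in> U" "g2 \<le> nsmul m c2"
    using Suc.prems(3) g(3,5) \<open>g2 \<le> g\<close> by blast
  obtain c where c: "c \<in> U" "c1 \<le> c" "c2 \<le> c"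
    using interval_directed[OF U c1(1) c2(1)] by blast
  have "g1 \<le> nsmul (n * m) c" "g2 \<le> nsmul m c"
    using c1(2) c2(2) nsmul_mono[OF c(2)] nsmul_mono[OF c(3)] by (meson order.trans)+
  then have "g \<le> nsmul (n * m) c + nsmul m c"
    unfolding g(1) by (rule add_mono)
  also have "\<dots> = nsmul (Suc n * m) c"
    by (simp add: nsmul_add add.commute)
  finally show ?case
    using c(1) by blast
qed

lemma mult_cofinal_Int:
  assumes R: "riesz_group TYPE('a::ordered_ab_group_add)"
    and A: "is_interval (A::'a set)" and B: "is_interval B"
    and "mult_cofinal p A" and "mult_cofinal r B"
  shows "mult_cofinal (p * r) (A \<inter> B)"
  unfolding mult_cofinal_def
proof (intro allI impI)
  fix g :: 'a assume "0 \<le> g"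
  have AB: "is_interval (A \<inter> B)"
    using is_interval_Int[OF R A B] .
  obtain a where a: "a \<in> A" "g \<le> nsmul p a"
    using \<open>mult_cofinal p A\<close> \<open>0 \<le> g\<close> unfolding mult_cofinal_def by blast
  show "\<exists>s\<in>A \<inter> B. g \<le> nsmul (p * r) s"
  proof (rule riesz_nsmul_bound[OF R AB interval_nonneg[OF A a(1)] \<open>0 \<le> g\<close> a(2)])
    fix h assume h: "0 \<le> h" "h \<le> a" "h \<le> g"
    have "h \<in> A"
      using interval_down_closed[OF A a(1) h(1,2)] .
    obtain b where b: "b \<in> B" "h \<le> nsmul r b"
      using \<open>mult_cofinal r B\<close> h(1) unfolding mult_cofinal_def by blast
    have "\<exists>c\<in>A \<inter> B. h \<le> nsmul (r * 1) c"
    proof (rule riesz_nsmul_bound[OF R AB interval_nonneg[OF B b(1)] h(1) b(2)])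
      fix h' assume "0 \<le> h'" "h' \<le> b" "h' \<le> h"
      then have "h' \<in> A \<inter> B"
        using interval_down_closed[OF A \<open>h \<in> A\<close>] interval_down_closed[OF B b(1)] by blast
      then show "\<exists>c\<in>A \<inter> B. h' \<le> nsmul 1 c"
        by force
    qed
    then show "\<exists>c\<in>A \<inter> B. h \<le> nsmul r c"
      by simp
  qed
qed

lemma mult_cofinal_INT:
  assumes R: "riesz_group TYPE('a::ordered_ab_group_add)" and "finite I"
    and "\<And>i. i \<in> I \<Longrightarrow> is_interval (A i :: 'a set)"
    and "\<And>i. i \<in> I \<Longrightarrow> mult_cofinal (q i) (A i)"
  shows "mult_cofinal (prod q I) (pos_cone \<inter> \<Inter>(A ` I))"
  using assms(2-4)
proof (induction I rule: finite_induct)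
  case empty
  then show ?case
    by (auto simp: mult_cofinal_def pos_cone_def)
next
  case (insert i I)
  have "pos_cone \<inter> \<Inter>(A ` insert i I) = A i \<inter> (pos_cone \<inter> \<Inter>(A ` I))"
    by auto
  moreover have "mult_cofinal (q i * prod q I) (A i \<inter> (pos_cone \<inter> \<Inter>(A ` I)))"
    using insert by (intro mult_cofinal_Int[OF R] is_interval_INT[OF R]) auto
  ultimately show ?case
    using insert(1,2) by simp
qed

lemma is_interval_shift:
  assumes D: "is_interval D" and "a \<in> D"
  shows "is_interval {b. 0 \<le> b \<and> a + b \<in> D}"
proof (rule is_intervalI)
  have "0 \<le> a"
    using interval_nonneg[OF D \<open>a \<in> D\<close>] .
  show "0 \<in> {b. 0 \<le> b \<and> a + b \<in> D}"
    using \<open>a \<in> D\<close> by simp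
  show "z \<in> {b. 0 \<le> b \<and> a + b \<in> D}"
    if "x \<in> {b. 0 \<le> b \<and> a + b \<in> D}" "0 \<le> z" "z \<le> x" for x z
    using that \<open>0 \<le> a\<close> interval_down_closed[OF D, of "a + x" "a + z"] by simp
  show "\<exists>z\<in>{b. 0 \<le> b \<and> a + b \<in> D}. x \<le> z \<and> y \<le> z"
    if xy: "x \<in> {b. 0 \<le> b \<and> a + b \<in> D}" "y \<in> {b. 0 \<le> b \<and> a + b \<in> D}" for x y
  proof -
    obtain e where e: "e \<in> D" "a + x \<le> e" "a + y \<le> e"
      using xy interval_directed[OF D, of "a + x" "a + y"] by auto
    have "a \<le> a + x"
      using xy by simp
    then have "a \<le> e"
      using e(2) by (rule order.trans)
    then have "e - a \<in> {b. 0 \<le> b \<and> a + b \<in> D}"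
      using e(1) by simp
    moreover have "x \<le> e - a" "y \<le> e - a"
      using e(2,3) by (simp_all add: le_diff_eq add.commute)
    ultimately show ?thesis
      by blast
  qed
qed simp

lemma mult_cofinal_shift:
  assumes D: "is_interval D" and "a \<in> D" and "mult_cofinal n D"
  shows "mult_cofinal n {b. 0 \<le> b \<and> a + b \<in> D}"
  unfolding mult_cofinal_def
proof (intro allI impI)
  fix g :: 'a assume "0 \<le> g"
  then have "0 \<le> g + nsmul n a"
    using nsmul_nonneg[OF interval_nonneg[OF D \<open>a \<in> D\<close>]] by (rule add_nonneg_nonneg)
  then obtain e where e: "e \<in> D" "g + nsmul n a \<le> nsmul n e"
    using \<open>mult_cofinal n D\<close> unfolding mult_cofinal_def by blast
  obtain e' where e': "e' \<in> D" "e \<le> e'" "a \<le> e'"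
    using interval_directed[OF D e(1) \<open>a \<in> D\<close>] by blast
  have "g + nsmul n a \<le> nsmul n e'"
    using e(2) nsmul_mono[OF e'(2)] by (rule order_trans)
  then have "g \<le> nsmul n (e' - a)"
    unfolding nsmul_diff le_diff_eq .
  moreover have "e' - a \<in> {b. 0 \<le> b \<and> a + b \<in> D}"
    using e' by simp
  ultimately show "\<exists>s\<in>{b. 0 \<le> b \<and> a + b \<in> D}. g \<le> nsmul n s"
    by blast
qed

lemma exists_common_increment:
  fixes D :: "nat \<Rightarrow> 'a::ordered_ab_group_add set"
  assumes R: "riesz_group TYPE('a)" and "finite I"
    and D: "\<And>i. i \<in> I \<Longrightarrow> is_interval (D i)"
    and cof: "\<And>i. i \<in> I \<Longrightarrow> mult_cofinal (q i) (D i)"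
    and x: "\<And>i. i \<in> I \<Longrightarrow> x i \<in> D i"
    and "0 \<le> g"
  obtains d where "0 \<le> d" "\<And>i. i \<in> I \<Longrightarrow> x i + d \<in> D i" "g \<le> nsmul (prod q I) d"
proof -
  let ?A = "\<lambda>i. {b. 0 \<le> b \<and> x i + b \<in> D i}"
  have "mult_cofinal (prod q I) (pos_cone \<inter> \<Inter>(?A ` I))"
    using assms by (intro mult_cofinal_INT[OF R] is_interval_shift mult_cofinal_shift) auto
  then obtain d where "d \<in> pos_cone \<inter> \<Inter>(?A ` I)" "g \<le> nsmul (prod q I) d"
    using \<open>0 \<le> g\<close> unfolding mult_cofinal_def by blast
  then show ?thesis
    using that by (auto simp: pos_cone_def)
qed

definition interval_of_seq :: "(nat \<Rightarrow> 'a::ordered_ab_group_add) \<Rightarrow> 'a set" where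
  "interval_of_seq f = {y. 0 \<le> y \<and> (\<exists>k. y \<le> f k)}"

lemma mono_nonneg:
  fixes f :: "nat \<Rightarrow> 'a::ordered_ab_group_add"
  assumes "mono f" and "0 \<le> f 0"
  shows "0 \<le> f k"
  using order.trans[OF assms(2) monoD[OF assms(1)]] by simp

lemma cg_interval_of_seq:
  fixes f :: "nat \<Rightarrow> 'a::ordered_ab_group_add"
  assumes f: "mono f" and "0 \<le> f 0"
  shows "cg_interval (interval_of_seq f)"
  unfolding cg_interval_def
proof (intro conjI exI)
  have nonneg: "0 \<le> f k" for k
    using mono_nonneg f \<open>0 \<le> f 0\<close> .
  show "is_interval (interval_of_seq f)"
  proof (rule is_intervalI)
    show "\<exists>z\<in>interval_of_seq f. x \<le> z \<and> y \<le> z"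
      if xy: "x \<in> interval_of_seq f" "y \<in> interval_of_seq f" for x y
    proof -
      obtain k1 k2 where "x \<le> f k1" "y \<le> f k2"
        using xy unfolding interval_of_seq_def by blast
      moreover have "f k1 \<le> f (max k1 k2)" "f k2 \<le> f (max k1 k2)"
        using monoD[OF f] by simp_all
      ultimately have "x \<le> f (max k1 k2)" "y \<le> f (max k1 k2)"
        by (meson order.trans)+
      moreover have "f (max k1 k2) \<in> interval_of_seq f"
        using nonneg unfolding interval_of_seq_def by blast
      ultimately show ?thesis
        by blast
    qed
    show "z \<in> interval_of_seq f" if "x \<in> interval_of_seq f" "0 \<le> z" "z \<le> x" for x z
      using that unfolding interval_of_seq_def by (blast intro: order.trans[of z x])
  qed (use nonneg in \<open>auto simp: interval_of_seq_def\<close>)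
  show "countable (range f)" "range f \<subseteq> interval_of_seq f"
      "\<forall>x\<in>interval_of_seq f. \<exists>c\<in>range f. x \<le> c"
    using nonneg by (auto simp: interval_of_seq_def)
qed

lemma interval_add_of_seq:
  fixes f g :: "nat \<Rightarrow> 'a::ordered_ab_group_add"
  assumes f: "mono f" "0 \<le> f 0" and g: "mono g" "0 \<le> g 0"
  shows "interval_add (interval_of_seq f) (interval_of_seq g) = interval_of_seq (\<lambda>k. f k + g k)"
proof (intro set_eqI iffI)
  fix z assume "z \<in> interval_add (interval_of_seq f) (interval_of_seq g)"
  then obtain x y k1 k2 where z: "0 \<le> z" "z \<le> x + y" "x \<le> f k1" "y \<le> g k2"
    unfolding interval_add_def interval_of_seq_def by blast
  have "f k1 \<le> f (max k1 k2)" "g k2 \<le> g (max k1 k2)"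
    using monoD[OF f(1)] monoD[OF g(1)] by simp_all
  then have "x + y \<le> f (max k1 k2) + g (max k1 k2)"
    using z(3,4) by (intro add_mono) (meson order.trans)+
  then have "z \<le> f (max k1 k2) + g (max k1 k2)"
    using z(2) by (rule order.trans[rotated])
  with z(1) show "z \<in> interval_of_seq (\<lambda>k. f k + g k)"
    unfolding interval_of_seq_def by blast
next
  fix z assume "z \<in> interval_of_seq (\<lambda>k. f k + g k)"
  then obtain k where z: "0 \<le> z" "z \<le> f k + g k"
    unfolding interval_of_seq_def by blast
  moreover have "f k \<in> interval_of_seq f" "g k \<in> interval_of_seq g"
    using mono_nonneg f g unfolding interval_of_seq_def by blast+
  ultimately show "z \<in> interval_add (interval_of_seq f) (interval_of_seq g)"
    unfolding interval_add_def by blast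
qed

lemma interval_of_seq_subset:
  "is_interval D \<Longrightarrow> (\<And>k. f k \<in> D) \<Longrightarrow> interval_of_seq f \<subseteq> D"
  unfolding interval_of_seq_def using interval_down_closed by blast

lemma mult_cofinal_interval_of_seq:
  assumes "mono f" and "0 \<le> f 0" and "\<And>g. 0 \<le> g \<Longrightarrow> \<exists>k. g \<le> nsmul n (f k)"
  shows "mult_cofinal n (interval_of_seq f)"
  unfolding mult_cofinal_def interval_of_seq_def
  using assms mono_nonneg by blast

lemma generating_sequences_exist:
  fixes D :: "nat \<Rightarrow> 'a::ordered_ab_group_add set" and q :: "nat \<Rightarrow> nat" and u :: 'a
  assumes R: "riesz_group TYPE('a)"
    and D: "\<And>l. 1 \<le> l \<Longrightarrow> is_interval (D l)"
    and cof: "\<And>l. 1 \<le> l \<Longrightarrow> mult_cofinal (q l) (D l)"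
    and "0 \<le> u" and u: "\<And>g. 0 \<le> g \<Longrightarrow> \<exists>n. g \<le> nsmul n u"
  obtains r :: "nat \<Rightarrow> nat \<Rightarrow> 'a" where
    "\<And>k l. 1 \<le> l \<Longrightarrow> r k l \<in> D l"
    "\<And>l. r 0 l = 0"
    "\<And>l. mono (\<lambda>k. r k l)"
    "\<And>l. 1 \<le> l \<Longrightarrow> mono (\<lambda>k. r k l - r k (Suc l))"
    "\<And>l g. 1 \<le> l \<Longrightarrow> 0 \<le> g \<Longrightarrow> \<exists>k. g \<le> nsmul (\<Prod>j=1..l. q j) (r k l)"
proof -
  \<comment> \<open>idx visits every l \<ge> 1 at arbitrarily late steps: idx (prod_encode (l - 1, n)) = l.\<close>
  define idx where "idx k = Suc (fst (prod_decode k))" for k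
  let ?P = "\<lambda>x k d. 0 \<le> d \<and> (\<forall>l\<in>{1..idx k}. x l + d \<in> D l) \<and>
    nsmul k u \<le> nsmul (\<Prod>j=1..idx k. q j) d"
  have "\<exists>d. ?P x k d" if "\<And>l. 1 \<le> l \<Longrightarrow> x l \<in> D l" for x k
    using exists_common_increment[OF R, of "{1..idx k}" D q x "nsmul k u"]
      D cof that nsmul_nonneg[OF \<open>0 \<le> u\<close>] by (metis atLeastAtMost_iff finite_atLeastAtMost)
  then obtain pick where pick: "\<And>x k. (\<And>l. 1 \<le> l \<Longrightarrow> x l \<in> D l) \<Longrightarrow> ?P x k (pick x k)"
    by metis
  define r where "r = rec_nat (\<lambda>_. 0) (\<lambda>k x l. if 1 \<le> l \<and> l \<le> idx k then x l + pick x k else x l)"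
  have r0: "r 0 l = 0" for l
    by (simp add: r_def)
  have rS: "r (Suc k) l = (if 1 \<le> l \<and> l \<le> idx k then r k l + pick (r k) k else r k l)" for k l
    by (simp add: r_def)
  have r_in: "r k l \<in> D l" if "1 \<le> l" for k l
    using that
  proof (induction k arbitrary: l)
    case 0
    then show ?case
      using interval_zero[OF D[of l]] by (simp add: r0)
  next
    case (Suc k)
    then show ?case
      using pick[of "r k" k] by (auto simp: rS)
  qed
  define d where "d k = pick (r k) k" for k
  have d: "?P (r k) k (d k)" for k
    unfolding d_def using pick r_in by blast
  have r_Suc: "r (Suc k) l = r k l + (if 1 \<le> l \<and> l \<le> idx k then d k else 0)" for k l
    by (simp add: rS d_def)
  show ?thesis
  proof (rule that)
    show "r k l \<in> D l" if "1 \<le> l" for k l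
      using r_in that .
    show "r 0 l = 0" for l
      by (rule r0)
    show "mono (\<lambda>k. r k l)" for l
      unfolding mono_iff_le_Suc using d by (simp add: r_Suc)
    show "mono (\<lambda>k. r k l - r k (Suc l))" if "1 \<le> l" for l
    proof -
      have "r (Suc k) l - r (Suc k) (Suc l) = r k l - r k (Suc l) + (if l = idx k then d k else 0)" for k
        using that by (auto simp: r_Suc algebra_simps)
      then show ?thesis
        unfolding mono_iff_le_Suc using d by simp
    qed
    show "\<exists>k. g \<le> nsmul (\<Prod>j=1..l. q j) (r k l)" if "1 \<le> l" "0 \<le> g" for l g
    proof -
      obtain n where "g \<le> nsmul n u"
        using u \<open>0 \<le> g\<close> by blast
      define k where "k = prod_encode (l - 1, n)"
      have "idx k = l" "n \<le> k"
        using \<open>1 \<le> l\<close> by (simp_all add: idx_def k_def le_prod_encode_2)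
      have "g \<le> nsmul k u"
        using \<open>g \<le> nsmul n u\<close> nsmul_mono_left[OF \<open>0 \<le> u\<close> \<open>n \<le> k\<close>] by (rule order.trans)
      also have "\<dots> \<le> nsmul (\<Prod>j=1..l. q j) (d k)"
        using d[of k] \<open>idx k = l\<close> by simp
      also have "\<dots> \<le> nsmul (\<Prod>j=1..l. q j) (r (Suc k) l)"
        using interval_nonneg[OF D r_in] \<open>1 \<le> l\<close> \<open>idx k = l\<close>
        by (intro nsmul_mono) (simp add: r_Suc)
      finally show ?thesis ..
    qed
  qed
qed

theorem proposition3p5:
  fixes q :: "nat \<Rightarrow> nat" and D :: "nat \<Rightarrow> 'a::ordered_ab_group_add set"
  assumes "simple_group TYPE('a)"
    and "riesz_group TYPE('a)"
    and "\<And>i. 1 \<le> i \<Longrightarrow> q i \<le> q (Suc i)"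
    and "\<And>i j. 1 \<le> i \<Longrightarrow> 1 \<le> j \<Longrightarrow> i \<noteq> j \<Longrightarrow> gcd (q i) (q j) = 1"
    and "\<And>i. 1 \<le> i \<Longrightarrow> cg_interval (D i)"
    and "\<And>i t. 1 \<le> i \<Longrightarrow> 1 \<le> t \<Longrightarrow> t + 1 \<le> q i \<Longrightarrow> interval_mult t (D i) \<noteq> pos_cone"
    and "\<And>i. 1 \<le> i \<Longrightarrow> interval_mult (q i) (D i) = pos_cone"
  shows "\<exists>X :: nat \<Rightarrow> 'a set.
           (\<forall>i\<ge>1. cg_interval (X i)) \<and>
           (\<forall>i\<ge>1. \<exists>Y. cg_interval Y \<and> interval_add (X (Suc i)) Y = X i) \<and>
           (\<forall>i\<ge>1. \<forall>t. 1 \<le> t \<and> t + 1 \<le> q i \<longrightarrow> interval_mult t (X i) \<noteq> pos_cone) \<and>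
           (\<forall>i\<ge>1. interval_mult (\<Prod>j=1..i. q j) (X i) = pos_cone)"
proof -
  have D: "is_interval (D l)" if "1 \<le> l" for l
    using assms(5)[OF that] unfolding cg_interval_def by blast
  have cof: "mult_cofinal (q l) (D l)" if "1 \<le> l" for l
    using assms(7)[OF that] interval_mult_eq_pos_cone_iff[OF D[OF that]] by simp
  obtain u :: 'a where u: "0 \<le> u" "\<And>g. 0 \<le> g \<Longrightarrow> \<exists>n. g \<le> nsmul n u"
    using simple_group_cofinal_element[OF assms(1)] by blast
  obtain r :: "nat \<Rightarrow> nat \<Rightarrow> 'a" where r_in: "\<And>k l. 1 \<le> l \<Longrightarrow> r k l \<in> D l"
    and r0: "\<And>l. r 0 l = 0" and r_mono: "\<And>l. mono (\<lambda>k. r k l)"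
    and r_diff_mono: "\<And>l. 1 \<le> l \<Longrightarrow> mono (\<lambda>k. r k l - r k (Suc l))"
    and r_cofinal: "\<And>l g. 1 \<le> l \<Longrightarrow> 0 \<le> g \<Longrightarrow> \<exists>k. g \<le> nsmul (\<Prod>j=1..l. q j) (r k l)"
    using generating_sequences_exist[of D q u, OF assms(2) D cof u] by blast
  define X where "X l = interval_of_seq (\<lambda>k. r k l)" for l
  define Y where "Y l = interval_of_seq (\<lambda>k. r k l - r k (Suc l))" for l
  have X: "cg_interval (X i)" for i
    unfolding X_def using r_mono r0 by (simp add: cg_interval_of_seq)
  then have X_interval: "is_interval (X i)" for i
    unfolding cg_interval_def by blast
  have "cg_interval (Y i) \<and> interval_add (X (Suc i)) (Y i) = X i" if "1 \<le> i" for i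
    using cg_interval_of_seq[OF r_diff_mono[OF that]]
      interval_add_of_seq[OF r_mono _ r_diff_mono[OF that]] r0
    by (simp add: X_def Y_def)
  moreover have "interval_mult t (X i) \<noteq> pos_cone" if "1 \<le> i" "1 \<le> t" "t + 1 \<le> q i" for i t
  proof -
    have "X i \<subseteq> D i"
      unfolding X_def using interval_of_seq_subset[OF D[OF that(1)], of "\<lambda>k. r k i"] r_in[OF that(1)] by blast
    then show ?thesis
      using interval_mult_eq_pos_cone_mono[OF X_interval D[OF that(1)]] assms(6)[OF that] by blast
  qed
  moreover have "interval_mult (\<Prod>j=1..i. q j) (X i) = pos_cone" if "1 \<le> i" for i
    unfolding interval_mult_eq_pos_cone_iff[OF X_interval] unfolding X_def
    using mult_cofinal_interval_of_seq[OF r_mono] r0 r_cofinal[OF that] by simp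
  ultimately show ?thesis
    using X by blast
qed

end
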